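(* Let $f$ be a positive function with $f(u)\to0$ as $u\to\infty$ which is eventually $C^1$, decreasing, and strictly convex. If $f$ is regularly varying of index $-\alpha$ for some $0<\alpha\le1$, then $y\mapsto u_0(\mathrm{e}^{y})$ and $y\mapsto\omega(\mathrm{e}^{y})$ are regularly varying functions (as $y\to\infty$) of index $\frac{1}{1+\alpha}$; that is, $u_0(x^{\lambda})\sim\lambda^{1/(1+\alpha)}u_0(x)$ and $\omega(x^{\lambda})\sim\lambda^{1/(1+\alpha)}\omega(x)$ as $x\to\infty$ for every $\lambda>0$. If $f$ is slowly varying, then $y\mapsto\omega(\mathrm{e}^{y})$ is regularly varying of index $1$, i.e. $\omega(x^{\lambda})\sim\lambda\omega(x)$ for every $\lambda>0$.
   Context: A positive function $F$ is regularly varying of index $\rho$ if $F(\lambda u)/F(u)\to\lambda^{\rho}$ as $u\to\infty$ for every $\lambda>0$; slowly varying means index $0$. $h(u,x)=f(u)\log x+u$, $\omega(x)=\inf_{u\ge0}h(u,x)$, and for $x$ sufficiently large $u_0(x)$ is the unique minimizer of $u\mapsto h(u,x)$ (the unique solution of $f'(u)=-1/\log x$). *)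

theory Defs
  imports "HOL-Analysis.Analysis"
begin

definition regularly_varying :: "real \<Rightarrow> (real \<Rightarrow> real) \<Rightarrow> bool" where
  "regularly_varying \<rho> F \<longleftrightarrow>
     (\<forall>\<^sub>F u in at_top. F u > 0) \<and>
     (\<forall>c>0. ((\<lambda>u. F (c * u) / F u) \<longlongrightarrow> c powr \<rho>) at_top)"

abbreviation slowly_varying :: "(real \<Rightarrow> real) \<Rightarrow> bool" where
  "slowly_varying F \<equiv> regularly_varying 0 F"

definition strictly_convex_on :: "real set \<Rightarrow> (real \<Rightarrow> real) \<Rightarrow> bool" where
  "strictly_convex_on S f \<longleftrightarrow> convex S \<and>
     (\<forall>x\<in>S. \<forall>y\<in>S. \<forall>t. x \<noteq> y \<and> 0 < t \<and> t < 1 \<longrightarrow>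
        f (t * x + (1 - t) * y) < t * f x + (1 - t) * f y)"

definition h :: "(real \<Rightarrow> real) \<Rightarrow> real \<Rightarrow> real \<Rightarrow> real" where
  "h f u x = f u * ln x + u"

definition omega :: "(real \<Rightarrow> real) \<Rightarrow> real \<Rightarrow> real" where
  "omega f x = (INF u\<in>{0..}. h f u x)"

text \<open>The (for large x unique) minimiser of u |-> h f u x over u >= 0.\<close>
definition u0 :: "(real \<Rightarrow> real) \<Rightarrow> real \<Rightarrow> real" where
  "u0 f x = (THE u. u \<ge> 0 \<and> (\<forall>v\<ge>0. h f u x \<le> h f v x))"

end

theory Submission
  imports Defs
begin

text \<open>Put \<open>y = ln x\<close>, so that \<open>h f v x = f v * y + v\<close>, and let \<open>\<mu> y\<close> be the minimiser
  and \<open>\<phi> y = f (\<mu> y) * y + \<mu> y\<close> the minimum. By the envelope theorem \<open>\<phi>' y = f (\<mu> y)\<close>, so the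
  elasticity of \<open>\<phi>\<close> is \<open>y \<phi>'/\<phi> = 1 / (1 + r)\<close> with \<open>r = \<mu> / (y f(\<mu>))\<close>. Comparing the minimum
  with the values at \<open>c \<mu>\<close> for \<open>c\<close> close to 1 and using \<open>f (c u) / f u \<rightarrow> c\<^sup>-\<^sup>\<alpha>\<close> shows
  \<open>r \<rightarrow> \<alpha>\<close>, the derivative of \<open>c\<^sup>-\<^sup>\<alpha>\<close> at 1 being \<open>-\<alpha>\<close>. A positive function whose
  elasticity tends to \<open>\<beta>\<close> is regularly varying of index \<open>\<beta>\<close>, which gives the claim for \<open>\<phi>\<close>;
  and \<open>\<mu> = \<phi> r / (1 + r)\<close> with \<open>r / (1 + r) \<rightarrow> \<alpha> / (1 + \<alpha>) > 0\<close> when \<open>\<alpha> > 0\<close>.\<close>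

subsection \<open>Real analysis\<close>

lemma filterlim_const_mult_at_top:
  "c > 0 \<Longrightarrow> filterlim (\<lambda>y. c * y) at_top (at_top :: real filter)"
  by (intro filterlim_tendsto_pos_mult_at_top[OF tendsto_const _ filterlim_ident])

lemma eventually_at_top_imp_eventually_at:
  fixes P :: "'a::{linorder_topology, no_top} \<Rightarrow> bool"
  assumes "\<forall>\<^sub>F z in at_top. P z"
  shows "\<forall>\<^sub>F y in at_top. \<forall>\<^sub>F z in at y. P z"
proof -
  obtain Y where Y: "\<And>z. z \<ge> Y \<Longrightarrow> P z"
    using assms unfolding eventually_at_top_linorder by blast
  have near: "\<forall>\<^sub>F z in at y. P z" if "y > Y" for y
    using order_tendstoD(1)[OF tendsto_ident_at that] by (rule eventually_mono) (use Y in auto)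
  show ?thesis
    by (rule eventually_mono[OF eventually_gt_at_top[of Y] near])
qed

lemma isCont_if_strict_mono_comp:
  fixes g k u :: "real \<Rightarrow> real"
  assumes mono: "\<And>a b. U < a \<Longrightarrow> a < b \<Longrightarrow> g a < g b"
    and near: "\<forall>\<^sub>F z in at y. U < u z \<and> g (u z) = k z"
    and at: "U < u y" "g (u y) = k y"
    and k: "isCont k y"
  shows "isCont u y"
  unfolding isCont_def
proof (rule tendstoI)
  fix r :: real
  assume "r > 0"
  define e where "e = min r ((u y - U) / 2)"
  have e: "0 < e" "e \<le> r" "U < u y - e"
    using \<open>r > 0\<close> at(1) unfolding e_def by (auto simp: min_def field_simps)
  have "g (u y - e) < k y" "k y < g (u y + e)"
    using mono[of "u y - e" "u y"] mono[of "u y" "u y + e"] e at by auto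
  then have "\<forall>\<^sub>F z in at y. g (u y - e) < k z \<and> k z < g (u y + e)"
    using k unfolding isCont_def by (intro eventually_conj order_tendstoD)
  with near show "\<forall>\<^sub>F z in at y. dist (u z) (u y) < r"
  proof eventually_elim
    case (elim z)
    have "\<not> u y + e \<le> u z"
      using mono[of "u y + e" "u z"] e elim by (cases "u y + e = u z") auto
    moreover have "\<not> u z \<le> u y - e"
      using mono[of "u z" "u y - e"] elim by (cases "u z = u y - e") auto
    ultimately show ?case
      using e by (simp add: dist_real_def abs_less_iff)
  qed
qed

lemma DERIV_if_secant_bounds:
  fixes \<phi> g :: "real \<Rightarrow> real"
  assumes bounds: "\<forall>\<^sub>F z in at y. (z - y) * g z \<le> \<phi> z - \<phi> y \<and> \<phi> z - \<phi> y \<le> (z - y) * g y"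
    and g: "isCont g y"
  shows "(\<phi> has_real_derivative g y) (at y)"
proof -
  have "\<forall>\<^sub>F z in at y. norm ((\<phi> z - \<phi> y) / (z - y) - g y) \<le> \<bar>g z - g y\<bar>"
    using bounds eventually_neq_at_within[of y y UNIV]
  proof eventually_elim
    case (elim z)
    show ?case
    proof (cases "z > y")
      case True
      with elim have "g z \<le> (\<phi> z - \<phi> y) / (z - y)" "(\<phi> z - \<phi> y) / (z - y) \<le> g y"
        by (simp_all add: pos_le_divide_eq pos_divide_le_eq mult.commute)
      then show ?thesis by simp
    next
      case False
      with elim have "z - y < 0" by simp
      with elim have "g y \<le> (\<phi> z - \<phi> y) / (z - y)" "(\<phi> z - \<phi> y) / (z - y) \<le> g z"
        by (simp_all add: neg_le_divide_eq neg_divide_le_eq mult.commute)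
      then show ?thesis by simp
    qed
  qed
  moreover have "((\<lambda>z. \<bar>g z - g y\<bar>) \<longlongrightarrow> 0) (at y)"
    using g unfolding isCont_def by (intro tendsto_rabs_zero LIM_zero)
  ultimately have "((\<lambda>z. (\<phi> z - \<phi> y) / (z - y) - g y) \<longlongrightarrow> 0) (at y)"
    by (rule Lim_null_comparison)
  then show ?thesis
    unfolding has_field_derivative_iff by (simp add: LIM_zero_iff)
qed

lemma tendsto_shift_diff_if_deriv_tendsto:
  fixes g G :: "real \<Rightarrow> real"
  assumes deriv: "\<And>t. t > T \<Longrightarrow> (g has_real_derivative G t) (at t)"
    and lim: "(G \<longlongrightarrow> \<beta>) at_top"
  shows "((\<lambda>t. g (t + s) - g t) \<longlongrightarrow> \<beta> * s) at_top"
proof (rule tendstoI)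
  fix e :: real
  assume "e > 0"
  define \<epsilon> where "\<epsilon> = e / (\<bar>s\<bar> + 1)"
  have "\<epsilon> > 0" "\<epsilon> * \<bar>s\<bar> < e"
    using \<open>e > 0\<close> unfolding \<epsilon>_def by (auto simp: field_simps)
  obtain T' where T': "\<And>t. t \<ge> T' \<Longrightarrow> \<bar>G t - \<beta>\<bar> < \<epsilon>"
    using tendstoD[OF lim \<open>\<epsilon> > 0\<close>] unfolding eventually_at_top_linorder dist_real_def by blast
  define S where "S = {max T' (T + 1)..}"
  have bound: "\<bar>(g a - \<beta> * a) - (g b - \<beta> * b)\<bar> \<le> \<epsilon> * \<bar>a - b\<bar>" if "a \<in> S" "b \<in> S" for a b
  proof -
    have "norm ((g a - \<beta> * a) - (g b - \<beta> * b)) \<le> \<epsilon> * norm (a - b)"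
    proof (rule field_differentiable_bound[where S = S])
      show "((\<lambda>t. g t - \<beta> * t) has_field_derivative G z - \<beta>) (at z within S)" if "z \<in> S" for z
        using has_field_derivative_at_within[OF deriv[of z]] that unfolding S_def
        by (auto intro!: derivative_eq_intros)
      show "norm (G z - \<beta>) \<le> \<epsilon>" if "z \<in> S" for z
        using T'[of z] that unfolding S_def by simp
    qed (use that in \<open>auto simp: S_def\<close>)
    then show ?thesis by simp
  qed
  have "dist (g (t + s) - g t) (\<beta> * s) < e" if "t \<ge> max T' (T + 1) + \<bar>s\<bar>" for t
  proof -
    have "t \<in> S" "t + s \<in> S"
      using that abs_ge_self[of s] abs_ge_minus_self[of s] unfolding S_def by auto
    have "dist (g (t + s) - g t) (\<beta> * s) = \<bar>(g (t + s) - \<beta> * (t + s)) - (g t - \<beta> * t)\<bar>"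
      by (simp add: dist_real_def algebra_simps)
    also have "\<dots> \<le> \<epsilon> * \<bar>s\<bar>"
      using bound[OF \<open>t + s \<in> S\<close> \<open>t \<in> S\<close>] by simp
    finally show ?thesis
      using \<open>\<epsilon> * \<bar>s\<bar> < e\<close> by simp
  qed
  then show "\<forall>\<^sub>F t in at_top. dist (g (t + s) - g t) (\<beta> * s) < e"
    unfolding eventually_at_top_linorder by blast
qed

text \<open>If \<open>Q c \<rightarrow> P c\<close> and \<open>(1 - c) r \<le> Q c - 1\<close> for every \<open>c > 0\<close>, dividing by \<open>1 - c\<close>
  bounds \<open>r\<close> from above (\<open>c < 1\<close>) and from below (\<open>c > 1\<close>) by difference quotients of \<open>P\<close>
  at 1, which tend to \<open>-P'(1)\<close>.\<close>

lemma tendsto_of_difference_quotient_bounds: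
  fixes r :: "'a \<Rightarrow> real" and P :: "real \<Rightarrow> real"
  assumes P: "(P has_real_derivative - \<alpha>) (at 1)" "P 1 = 1"
    and Q: "\<And>c. c > 0 \<Longrightarrow> (Q c \<longlongrightarrow> P c) F"
    and bound: "\<And>c. c > 0 \<Longrightarrow> \<forall>\<^sub>F y in F. (1 - c) * r y \<le> Q c y - 1"
  shows "(r \<longlongrightarrow> \<alpha>) F"
proof -
  have quot: "((\<lambda>c. (P c - 1) / (c - 1)) \<longlongrightarrow> - \<alpha>) (at 1)"
    using P unfolding has_field_derivative_iff by simp
  show ?thesis
  proof (rule order_tendstoI)
    fix a
    assume "a > \<alpha>"
    have "\<forall>\<^sub>F c in at_left 1. c \<in> {0<..<1} \<and> (P c - 1) / (c - 1) > - a"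
      using order_tendstoD(1)[OF quot, of "- a"] \<open>a > \<alpha>\<close> eventually_at_left_real[of 0 1]
      by (auto simp: eventually_at_split elim: eventually_elim2)
    then obtain c where c: "0 < c" "c < 1" "(P c - 1) / (c - 1) > - a"
      using eventually_happens'[OF trivial_limit_at_left_real] by auto
    then have "P c < 1 + a * (1 - c)"
      by (simp add: neg_less_divide_eq algebra_simps)
    from order_tendstoD(2)[OF Q[OF c(1)] this] bound[OF c(1)]
    show "\<forall>\<^sub>F y in F. r y < a"
    proof eventually_elim
      case (elim y)
      then have "(1 - c) * r y < (1 - c) * a"
        by (simp add: algebra_simps)
      then show ?case
        using c by simp
    qed
  next
    fix a
    assume "a < \<alpha>"
    have "\<forall>\<^sub>F d in at_right 1. d \<in> {1<..<2} \<and> (P d - 1) / (d - 1) < - a"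
      using order_tendstoD(2)[OF quot, of "- a"] \<open>a < \<alpha>\<close> eventually_at_right_real[of 1 2]
      by (auto simp: eventually_at_split elim: eventually_elim2)
    then obtain d where d: "1 < d" "(P d - 1) / (d - 1) < - a"
      using eventually_happens'[OF trivial_limit_at_right_real] by auto
    then have "P d < 1 - a * (d - 1)"
      by (simp add: divide_less_eq algebra_simps)
    have "d > 0"
      using d by simp
    from order_tendstoD(2)[OF Q[OF \<open>d > 0\<close>] \<open>P d < 1 - a * (d - 1)\<close>] bound[OF \<open>d > 0\<close>]
    show "\<forall>\<^sub>F y in F. a < r y"
    proof eventually_elim
      case (elim y)
      then have "(1 - d) * r y < (1 - d) * a"
        by (simp add: algebra_simps)
      then show ?case
        using d by (simp add: mult_less_cancel_left)
    qed
  qed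
qed

subsection \<open>Regular variation\<close>

lemma regularly_varying_cong:
  assumes "regularly_varying \<beta> \<phi>" and "\<forall>\<^sub>F y in at_top. \<psi> y = \<phi> y"
  shows "regularly_varying \<beta> \<psi>"
proof -
  have "((\<lambda>y. \<psi> (c * y) / \<psi> y) \<longlongrightarrow> c powr \<beta>) at_top" if c: "c > 0" for c
  proof -
    have "\<forall>\<^sub>F y in at_top. \<psi> (c * y) = \<phi> (c * y)"
      using assms(2) filterlim_const_mult_at_top[OF c] by (rule eventually_compose_filterlim)
    with assms(2) have "\<forall>\<^sub>F y in at_top. \<phi> (c * y) / \<phi> y = \<psi> (c * y) / \<psi> y"
      by eventually_elim simp
    moreover have "((\<lambda>y. \<phi> (c * y) / \<phi> y) \<longlongrightarrow> c powr \<beta>) at_top"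
      using assms(1) c unfolding regularly_varying_def by blast
    ultimately show ?thesis
      by (rule Lim_transform_eventually[rotated])
  qed
  moreover have "\<forall>\<^sub>F y in at_top. \<psi> y > 0"
    using assms unfolding regularly_varying_def by (auto elim: eventually_elim2)
  ultimately show ?thesis
    unfolding regularly_varying_def by blast
qed

lemma regularly_varying_mult_tendsto_pos:
  assumes rv: "regularly_varying \<beta> \<phi>" and g: "(g \<longlongrightarrow> L) at_top" and "L > 0"
  shows "regularly_varying \<beta> (\<lambda>y. \<phi> y * g y)"
proof -
  have "((\<lambda>y. \<phi> (c * y) * g (c * y) / (\<phi> y * g y)) \<longlongrightarrow> c powr \<beta>) at_top" if c: "c > 0" for c
  proof -
    have "((\<lambda>y. g (c * y)) \<longlongrightarrow> L) at_top"
      using filterlim_compose[OF g filterlim_const_mult_at_top[OF c]] by (simp add: o_def)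
    moreover have "((\<lambda>y. \<phi> (c * y) / \<phi> y) \<longlongrightarrow> c powr \<beta>) at_top"
      using rv c unfolding regularly_varying_def by blast
    ultimately have "((\<lambda>y. \<phi> (c * y) / \<phi> y * (g (c * y) / g y)) \<longlongrightarrow> c powr \<beta> * (L / L)) at_top"
      using g \<open>L > 0\<close> by (intro tendsto_intros) auto
    then show ?thesis
      using \<open>L > 0\<close> by (simp add: times_divide_times_eq)
  qed
  moreover have "\<forall>\<^sub>F y in at_top. \<phi> y * g y > 0"
    using rv order_tendstoD(1)[OF g \<open>L > 0\<close>] unfolding regularly_varying_def
    by (auto elim: eventually_elim2)
  ultimately show ?thesis
    unfolding regularly_varying_def by blast
qed

text \<open>On the logarithmic scale \<open>t = ln y\<close> the elasticity is the derivative of \<open>ln \<phi> (e\<^sup>t)\<close>,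
  so \<open>ln \<phi> (c y) - ln \<phi> y \<rightarrow> \<beta> ln c\<close>.\<close>

lemma regularly_varying_if_elasticity_tendsto:
  fixes \<phi> \<phi>' :: "real \<Rightarrow> real"
  assumes deriv: "\<forall>\<^sub>F y in at_top. (\<phi> has_real_derivative \<phi>' y) (at y) \<and> \<phi> y > 0"
    and elasticity: "((\<lambda>y. y * \<phi>' y / \<phi> y) \<longlongrightarrow> \<beta>) at_top"
  shows "regularly_varying \<beta> \<phi>"
proof -
  obtain Y where "Y > 0" and Y: "\<And>y. y \<ge> Y \<Longrightarrow> (\<phi> has_real_derivative \<phi>' y) (at y) \<and> \<phi> y > 0"
    using eventually_conj[OF deriv eventually_gt_at_top[of "0::real"]]
    unfolding eventually_at_top_linorder by (metis order.refl)
  define g where "g t = ln (\<phi> (exp t))" for t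
  have g_deriv: "(g has_real_derivative exp t * \<phi>' (exp t) / \<phi> (exp t)) (at t)" if "t > ln Y" for t
  proof -
    have "exp t > Y"
      using that \<open>Y > 0\<close> by (metis exp_less_cancel_iff exp_ln)
    then have "((\<lambda>t. \<phi> (exp t)) has_real_derivative \<phi>' (exp t) * exp t) (at t)"
      using Y by (intro DERIV_chain'[OF DERIV_exp]) auto
    from DERIV_chain'[OF this DERIV_ln_divide] show ?thesis
      using Y \<open>exp t > Y\<close> unfolding g_def by (simp add: mult.commute)
  qed
  have "((\<lambda>t. exp t * \<phi>' (exp t) / \<phi> (exp t)) \<longlongrightarrow> \<beta>) at_top"
    using filterlim_compose[OF elasticity exp_at_top] by (simp add: o_def)
  note shift = tendsto_shift_diff_if_deriv_tendsto[OF g_deriv this]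
  have "((\<lambda>y. \<phi> (c * y) / \<phi> y) \<longlongrightarrow> c powr \<beta>) at_top" if c: "c > 0" for c
  proof -
    have "((\<lambda>y. exp (g (ln y + ln c) - g (ln y))) \<longlongrightarrow> exp (\<beta> * ln c)) at_top"
      by (intro tendsto_exp filterlim_compose[OF shift ln_at_top])
    moreover have "\<forall>\<^sub>F y in at_top. exp (g (ln y + ln c) - g (ln y)) = \<phi> (c * y) / \<phi> y"
      using eventually_ge_at_top[of "max Y (Y / c)"]
    proof eventually_elim
      case (elim y)
      then have "y \<ge> Y" "c * y \<ge> Y" "y > 0"
        using c \<open>Y > 0\<close> by (auto simp: field_simps)
      then show ?case
        using Y[of y] Y[of "c * y"] c unfolding g_def by (simp add: exp_add exp_diff mult.commute)
    qed
    ultimately show ?thesis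
      using c by (simp add: Lim_transform_eventually powr_def mult.commute)
  qed
  moreover have "\<forall>\<^sub>F y in at_top. \<phi> y > 0"
    using deriv by (rule eventually_mono) simp
  ultimately show ?thesis
    unfolding regularly_varying_def by blast
qed

lemma strictly_convex_onD:
  assumes "strictly_convex_on S f" "x \<in> S" "y \<in> S" "x \<noteq> y" "0 < t" "t < 1"
  shows "f (t * x + (1 - t) * y) < t * f x + (1 - t) * f y"
  using assms unfolding strictly_convex_on_def by blast

lemma strictly_convex_on_subset:
  "strictly_convex_on S f \<Longrightarrow> T \<subseteq> S \<Longrightarrow> convex T \<Longrightarrow> strictly_convex_on T f"
  unfolding strictly_convex_on_def by blast

lemma strictly_convex_on_imp_convex_on:
  fixes f :: "real \<Rightarrow> real"
  assumes "strictly_convex_on S f"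
  shows "convex_on S f"
proof (rule convex_onI)
  fix t x y :: real
  assume t: "0 < t" "t < 1" and xy: "x \<in> S" "y \<in> S"
  show "f ((1 - t) *\<^sub>R x + t *\<^sub>R y) \<le> (1 - t) * f x + t * f y"
  proof (cases "x = y")
    case True
    then show ?thesis by (simp add: algebra_simps)
  next
    case False
    have "f ((1 - t) * x + (1 - (1 - t)) * y) < (1 - t) * f x + (1 - (1 - t)) * f y"
      by (rule strictly_convex_onD[OF assms]) (use t xy False in auto)
    then show ?thesis by simp
  qed
qed (use assms in \<open>simp add: strictly_convex_on_def\<close>)

text \<open>Both tangents lie below the graph at the midpoint, where strict convexity is strict.\<close>

lemma strictly_convex_on_deriv_less:
  fixes f :: "real \<Rightarrow> real"
  assumes sc: "strictly_convex_on S f" and "open S"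
    and diff: "\<And>v. v \<in> S \<Longrightarrow> f differentiable (at v)"
    and ab: "a \<in> S" "b \<in> S" "a < b"
  shows "deriv f a < deriv f b"
proof -
  define m where "m = (1 / 2) * a + (1 - 1 / 2) * b"
  have "convex S"
    using sc unfolding strictly_convex_on_def by blast
  then have "m \<in> S"
    using convexD[OF \<open>convex S\<close> ab(1,2), of "1/2" "1/2"] unfolding m_def by simp
  have tangent: "deriv f c * (m - c) \<le> f m - f c" if "c \<in> S" for c
  proof (rule convex_on_imp_above_tangent)
    show "convex_on S f"
      by (rule strictly_convex_on_imp_convex_on[OF sc])
    show "connected S"
      by (rule convex_connected[OF \<open>convex S\<close>])
    show "c \<in> interior S"
      using that \<open>open S\<close> by (simp add: interior_open)
    show "(f has_field_derivative deriv f c) (at c within S)"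
      using diff[OF that] by (simp add: DERIV_deriv_iff_real_differentiable has_field_derivative_at_within)
  qed (rule \<open>m \<in> S\<close>)
  have "f m < (1 / 2) * f a + (1 - 1 / 2) * f b"
    unfolding m_def by (rule strictly_convex_onD[OF sc]) (use ab in auto)
  with tangent[OF ab(1)] tangent[OF ab(2)] have "deriv f a * (b - a) < deriv f b * (b - a)"
    unfolding m_def by (simp add: algebra_simps)
  then show ?thesis
    using ab by simp
qed

subsection \<open>Minimisers of \<open>v \<mapsto> f v * y + v\<close>\<close>

definition cost_minimiser :: "(real \<Rightarrow> real) \<Rightarrow> real \<Rightarrow> real \<Rightarrow> bool" where
  "cost_minimiser f y w \<longleftrightarrow> w \<ge> 0 \<and> (\<forall>v\<ge>0. f w * y + w \<le> f v * y + v)"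

lemma h_exp: "h f v (exp y) = f v * y + v"
  by (simp add: h_def)

lemma omega_exp_eq:
  assumes "cost_minimiser f y w"
  shows "omega f (exp y) = f w * y + w"
proof -
  have "omega f (exp y) = (INF v\<in>{0..}. f v * y + v)"
    by (simp add: omega_def h_exp)
  also have "\<dots> = f w * y + w"
    using assms unfolding cost_minimiser_def by (intro cInf_eq_minimum) auto
  finally show ?thesis .
qed

lemma u0_exp_eq:
  assumes "cost_minimiser f y w" and "\<And>w'. cost_minimiser f y w' \<Longrightarrow> w' = w"
  shows "u0 f (exp y) = w"
proof -
  have "u0 f (exp y) = (THE w. cost_minimiser f y w)"
    by (simp add: u0_def h_exp cost_minimiser_def)
  also have "\<dots> = w"
    using assms by (rule the_equality)
  finally show ?thesis .
qed

lemma cost_minimiser_exists: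
  assumes pos: "\<And>u. u \<ge> 0 \<Longrightarrow> f u > 0" and cont: "continuous_on {0..} f" and "y \<ge> 0"
  shows "\<exists>w. cost_minimiser f y w"
proof -
  \<comment> \<open>beyond \<open>y f 0\<close> the cost exceeds its value at 0\<close>
  have "continuous_on {0..y * f 0} (\<lambda>v. f v * y + v)"
    by (intro continuous_intros continuous_on_subset[OF cont]) auto
  moreover have "{0..y * f 0} \<noteq> {}"
    using pos[of 0] \<open>y \<ge> 0\<close> by auto
  ultimately obtain w where w: "w \<in> {0..y * f 0}" "\<And>v. v \<in> {0..y * f 0} \<Longrightarrow> f w * y + w \<le> f v * y + v"
    using continuous_attains_inf[of "{0..y * f 0}" "\<lambda>v. f v * y + v"] by auto
  have "f w * y + w \<le> f v * y + v" if "v \<ge> 0" for v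
  proof (cases "v \<le> y * f 0")
    case True
    then show ?thesis using w that by auto
  next
    case False
    have "f w * y + w \<le> f 0 * y"
      using w(2)[of 0] pos[of 0] \<open>y \<ge> 0\<close> by auto
    also have "\<dots> < v"
      using False by (simp add: mult.commute)
    also have "\<dots> \<le> f v * y + v"
      using pos[OF that] \<open>y \<ge> 0\<close> by simp
    finally show ?thesis by simp
  qed
  then show ?thesis
    using w(1) unfolding cost_minimiser_def by auto
qed

lemma eventually_cost_minimisers_gt:
  assumes pos: "\<And>u. u \<ge> 0 \<Longrightarrow> f u > 0" and cont: "continuous_on {0..} f"
    and lim0: "(f \<longlongrightarrow> 0) at_top"
  shows "\<forall>\<^sub>F y in at_top. \<forall>w. cost_minimiser f y w \<longrightarrow> w > M"
proof -
  have "continuous_on {0..max 0 M} f"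
    using continuous_on_subset[OF cont] by auto
  then obtain x where x: "x \<in> {0..max 0 M}" "\<And>v. v \<in> {0..max 0 M} \<Longrightarrow> f x \<le> f v"
    using continuous_attains_inf[of "{0..max 0 M}" f] by auto
  define m where "m = f x"
  have "m > 0"
    using x pos unfolding m_def by auto
  obtain V where V: "V > 0" "f V < m / 2"
  proof -
    obtain v0 where "\<And>v. v \<ge> v0 \<Longrightarrow> f v < m / 2"
      using order_tendstoD(2)[OF lim0, of "m / 2"] \<open>m > 0\<close> unfolding eventually_at_top_linorder by auto
    then show ?thesis
      using that[of "max v0 1"] by auto
  qed
  \<comment> \<open>a minimiser \<open>w \<le> M\<close> would cost at least \<open>m y\<close>, but \<open>V\<close> costs less than \<open>m y / 2 + V\<close>\<close>
  have large: "w > M" if "y > 2 * V / m" and w: "cost_minimiser f y w" for y w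
  proof (rule ccontr)
    assume "\<not> w > M"
    then have "m \<le> f w"
      using x w unfolding m_def cost_minimiser_def by auto
    have "2 * V / m > 0"
      using V(1) \<open>m > 0\<close> by simp
    then have "y > 0"
      using that(1) by linarith
    have "m * y \<le> f w * y + w"
      using mult_right_mono[OF \<open>m \<le> f w\<close>, of y] \<open>y > 0\<close> w unfolding cost_minimiser_def by linarith
    also have "\<dots> \<le> f V * y + V"
      using w V unfolding cost_minimiser_def by auto
    also have "\<dots> < m / 2 * y + V"
      using V \<open>y > 0\<close> by simp
    finally have "y < 2 * V / m"
      using \<open>m > 0\<close> by (simp add: field_simps)
    then show False
      using that(1) by simp
  qed
  show ?thesis
    using eventually_gt_at_top[of "2 * V / m"] by (rule eventually_mono) (use large in blast)
qed

lemma cost_minimiser_unique: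
  assumes sc: "strictly_convex_on S f" and "y > 0"
    and w: "cost_minimiser f y w1" "cost_minimiser f y w2" "w1 \<in> S" "w2 \<in> S"
  shows "w1 = w2"
proof (rule ccontr)
  assume "w1 \<noteq> w2"
  define m where "m = (1 / 2) * w1 + (1 - 1 / 2) * w2"
  have "f m < (1 / 2) * f w1 + (1 - 1 / 2) * f w2"
    unfolding m_def by (rule strictly_convex_onD[OF sc]) (use w \<open>w1 \<noteq> w2\<close> in auto)
  then have "f m * y < ((1 / 2) * f w1 + (1 - 1 / 2) * f w2) * y"
    using \<open>y > 0\<close> by simp
  moreover have "f w1 * y + w1 \<le> f m * y + m" "f w2 * y + w2 \<le> f m * y + m"
    using w unfolding cost_minimiser_def m_def by auto
  ultimately show False
    unfolding m_def by (simp add: algebra_simps)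
qed

lemma cost_minimiser_deriv_eq:
  assumes "cost_minimiser f y w" "w > 0" "f differentiable (at w)"
  shows "deriv f w * y + 1 = 0"
proof (rule DERIV_local_min)
  show "((\<lambda>v. f v * y + v) has_real_derivative deriv f w * y + 1) (at w)"
    using assms(3) unfolding DERIV_deriv_iff_real_differentiable[symmetric]
    by (auto intro!: derivative_eq_intros)
  show "\<forall>v. \<bar>w - v\<bar> < w \<longrightarrow> f w * y + w \<le> f v * y + v"
    using assms(1) unfolding cost_minimiser_def by auto
qed (rule assms(2))

lemma cost_minimiser_secant_bounds:
  assumes a: "cost_minimiser f y a" and b: "cost_minimiser f z b"
  shows "(z - y) * f b \<le> (f b * z + b) - (f a * y + a)"
    and "(f b * z + b) - (f a * y + a) \<le> (z - y) * f a"
proof -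
  have "f a * y + a \<le> f b * y + b" "f b * z + b \<le> f a * z + a"
    using a b unfolding cost_minimiser_def by auto
  then show "(z - y) * f b \<le> (f b * z + b) - (f a * y + a)"
    and "(f b * z + b) - (f a * y + a) \<le> (z - y) * f a"
    by (simp_all add: algebra_simps)
qed

subsection \<open>Regular variation of the minimiser and the minimum\<close>

locale convex_vanishing_cost =
  fixes f :: "real \<Rightarrow> real" and U :: real
  assumes pos: "\<And>u. u \<ge> 0 \<Longrightarrow> f u > 0"
    and cont: "continuous_on {0..} f"
    and tendsto_zero: "(f \<longlongrightarrow> 0) at_top"
    and U_nonneg: "U \<ge> 0"
    and differentiable: "\<And>u. u > U \<Longrightarrow> f differentiable (at u)"
    and strictly_convex: "strictly_convex_on {U<..} f"
begin

abbreviation \<mu> :: "real \<Rightarrow> real" where "\<mu> y \<equiv> u0 f (exp y)"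

abbreviation \<phi> :: "real \<Rightarrow> real" where "\<phi> y \<equiv> omega f (exp y)"

lemma eventually_u0_exp_minimiser:
  "\<forall>\<^sub>F y in at_top. M < \<mu> y \<and> U < \<mu> y \<and> cost_minimiser f y (\<mu> y)"
proof -
  have "\<forall>\<^sub>F y in at_top. (\<forall>w. cost_minimiser f y w \<longrightarrow> w > max M U) \<and> y > 0"
    by (intro eventually_conj eventually_cost_minimisers_gt pos cont tendsto_zero eventually_gt_at_top)
  then show ?thesis
  proof (rule eventually_mono)
    fix y
    assume y: "(\<forall>w. cost_minimiser f y w \<longrightarrow> w > max M U) \<and> y > 0"
    obtain w where w: "cost_minimiser f y w"
      using cost_minimiser_exists[OF pos cont, of y] y by auto
    have "\<mu> y = w"
    proof (rule u0_exp_eq[OF w])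
      fix w'
      assume "cost_minimiser f y w'"
      then show "w' = w"
        using cost_minimiser_unique[OF strictly_convex, of y w' w] w y by auto
    qed
    then show "M < \<mu> y \<and> U < \<mu> y \<and> cost_minimiser f y (\<mu> y)"
      using w y by auto
  qed
qed

lemma eventually_u0_exp:
  "\<forall>\<^sub>F y in at_top. y > 0 \<and> U < \<mu> y \<and> cost_minimiser f y (\<mu> y) \<and> \<phi> y = f (\<mu> y) * y + \<mu> y"
  using eventually_u0_exp_minimiser[of 0] eventually_gt_at_top[of "0::real"]
  by eventually_elim (auto simp: omega_exp_eq)

lemma u0_exp_tendsto_at_top: "filterlim \<mu> at_top at_top"
  unfolding filterlim_at_top
proof
  fix Z
  show "\<forall>\<^sub>F y in at_top. Z \<le> \<mu> y"
    using eventually_u0_exp_minimiser[of Z] by (rule eventually_mono) simp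
qed

lemma eventually_deriv_u0_exp: "\<forall>\<^sub>F y in at_top. U < \<mu> y \<and> deriv f (\<mu> y) = - 1 / y"
  using eventually_u0_exp
proof eventually_elim
  case (elim y)
  then have "deriv f (\<mu> y) * y + 1 = 0"
    using U_nonneg differentiable by (intro cost_minimiser_deriv_eq) auto
  then show ?case
    using elim by (simp add: field_simps)
qed

text \<open>The first-order condition \<open>f'(\<mu> y) = -1/y\<close> inverts a strictly increasing function.\<close>

lemma eventually_isCont_u0_exp: "\<forall>\<^sub>F y in at_top. isCont \<mu> y"
  using eventually_at_top_imp_eventually_at[OF eventually_deriv_u0_exp]
    eventually_deriv_u0_exp eventually_gt_at_top[of "0::real"]
proof eventually_elim
  case (elim y)
  show ?case
  proof (rule isCont_if_strict_mono_comp[where g = "deriv f" and k = "\<lambda>z. - 1 / z"])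
    show "deriv f a < deriv f b" if "U < a" "a < b" for a b
      using strictly_convex_on_deriv_less[OF strictly_convex _ differentiable] that by auto
    show "isCont (\<lambda>z. - 1 / z) y"
      using elim by (intro continuous_intros) auto
  qed (use elim in auto)
qed

lemma eventually_omega_exp_has_derivative:
  "\<forall>\<^sub>F y in at_top. (\<phi> has_real_derivative f (\<mu> y)) (at y)"
  using eventually_at_top_imp_eventually_at[OF eventually_u0_exp]
    eventually_u0_exp eventually_isCont_u0_exp
proof eventually_elim
  case (elim y)
  note near = elim(1) and at_y = elim(2) and isCont_y = elim(3)
  show ?case
  proof (rule DERIV_if_secant_bounds)
    have "isCont f (\<mu> y)"
      using differentiable[of "\<mu> y"] at_y by (simp add: differentiable_imp_continuous_within)
    then show "isCont (\<lambda>z. f (\<mu> z)) y"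
      by (rule isCont_o2[OF isCont_y])
    from near show "\<forall>\<^sub>F z in at y. (z - y) * f (\<mu> z) \<le> \<phi> z - \<phi> y \<and> \<phi> z - \<phi> y \<le> (z - y) * f (\<mu> y)"
    proof eventually_elim
      case (elim z)
      then show ?case
        using cost_minimiser_secant_bounds[of f y "\<mu> y" z "\<mu> z"] at_y by simp
    qed
  qed
qed

lemma cost_ratio_tendsto:
  assumes "regularly_varying (- \<alpha>) f"
  shows "((\<lambda>y. \<mu> y / (y * f (\<mu> y))) \<longlongrightarrow> \<alpha>) at_top"
proof (rule tendsto_of_difference_quotient_bounds
    [where P = "\<lambda>c. c powr (- \<alpha>)" and Q = "\<lambda>c y. f (c * \<mu> y) / f (\<mu> y)"])
  show "((\<lambda>c. c powr (- \<alpha>)) has_real_derivative - \<alpha>) (at 1)"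
    using has_real_derivative_powr[of 1 "- \<alpha>"] by simp
  show "((\<lambda>y. f (c * \<mu> y) / f (\<mu> y)) \<longlongrightarrow> c powr (- \<alpha>)) at_top" if "c > 0" for c
    using assms that filterlim_compose[OF _ u0_exp_tendsto_at_top, of "\<lambda>u. f (c * u) / f u"]
    unfolding regularly_varying_def by (simp add: o_def)
  show "\<forall>\<^sub>F y in at_top. (1 - c) * (\<mu> y / (y * f (\<mu> y))) \<le> f (c * \<mu> y) / f (\<mu> y) - 1"
    if "c > 0" for c
    using eventually_u0_exp
  proof eventually_elim
    case (elim y)
    then have "f (\<mu> y) * y + \<mu> y \<le> f (c * \<mu> y) * y + c * \<mu> y"
      using \<open>c > 0\<close> U_nonneg unfolding cost_minimiser_def by auto
    then have "(1 - c) * \<mu> y \<le> y * (f (c * \<mu> y) - f (\<mu> y))"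
      by (simp add: algebra_simps)
    moreover have "f (\<mu> y) > 0"
      using pos elim U_nonneg by auto
    ultimately have "(1 - c) * \<mu> y / (y * f (\<mu> y)) \<le> y * (f (c * \<mu> y) - f (\<mu> y)) / (y * f (\<mu> y))"
      using elim by (intro divide_right_mono) auto
    then show ?case
      using elim \<open>f (\<mu> y) > 0\<close> by (simp add: diff_divide_distrib)
  qed
qed simp

lemma omega_exp_regularly_varying:
  assumes "\<alpha> \<ge> 0" "regularly_varying (- \<alpha>) f"
  shows "regularly_varying (1 / (1 + \<alpha>)) \<phi>"
proof (rule regularly_varying_if_elasticity_tendsto)
  show "\<forall>\<^sub>F y in at_top. (\<phi> has_real_derivative f (\<mu> y)) (at y) \<and> \<phi> y > 0"
    using eventually_omega_exp_has_derivative eventually_u0_exp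
    by eventually_elim (use pos U_nonneg in \<open>auto intro!: add_pos_pos\<close>)
  have "((\<lambda>y. 1 / (1 + \<mu> y / (y * f (\<mu> y)))) \<longlongrightarrow> 1 / (1 + \<alpha>)) at_top"
    using assms by (intro tendsto_intros cost_ratio_tendsto) auto
  moreover have "\<forall>\<^sub>F y in at_top. 1 / (1 + \<mu> y / (y * f (\<mu> y))) = y * f (\<mu> y) / \<phi> y"
    using eventually_u0_exp
  proof eventually_elim
    case (elim y)
    then have "f (\<mu> y) > 0"
      using pos U_nonneg by auto
    then show ?case
      using elim by (simp add: field_simps)
  qed
  ultimately show "((\<lambda>y. y * f (\<mu> y) / \<phi> y) \<longlongrightarrow> 1 / (1 + \<alpha>)) at_top"
    by (rule Lim_transform_eventually)
qed

lemma u0_exp_regularly_varying: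
  assumes "\<alpha> > 0" "regularly_varying (- \<alpha>) f"
  shows "regularly_varying (1 / (1 + \<alpha>)) \<mu>"
proof (rule regularly_varying_cong)
  define r where "r y = \<mu> y / (y * f (\<mu> y))" for y
  have "(r \<longlongrightarrow> \<alpha>) at_top"
    unfolding r_def using assms(2) by (rule cost_ratio_tendsto)
  then have "((\<lambda>y. r y / (1 + r y)) \<longlongrightarrow> \<alpha> / (1 + \<alpha>)) at_top"
    using assms(1) by (intro tendsto_intros) auto
  moreover have "regularly_varying (1 / (1 + \<alpha>)) \<phi>"
    using assms by (intro omega_exp_regularly_varying) auto
  ultimately show "regularly_varying (1 / (1 + \<alpha>)) (\<lambda>y. \<phi> y * (r y / (1 + r y)))"
    using assms(1) by (intro regularly_varying_mult_tendsto_pos[where L = "\<alpha> / (1 + \<alpha>)"]) auto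
  show "\<forall>\<^sub>F y in at_top. \<mu> y = \<phi> y * (r y / (1 + r y))"
    using eventually_u0_exp
  proof eventually_elim
    case (elim y)
    then have "f (\<mu> y) > 0" "f (\<mu> y) * y > 0" "\<mu> y > 0"
      using pos U_nonneg by auto
    then have "r y / (1 + r y) = \<mu> y / \<phi> y"
      using elim unfolding r_def by (simp add: field_simps)
    moreover have "\<phi> y > 0"
      using elim \<open>f (\<mu> y) * y > 0\<close> \<open>\<mu> y > 0\<close> by simp
    ultimately show ?case
      by simp
  qed
qed

end

theorem proposition2p2:
  fixes f :: "real \<Rightarrow> real"
  assumes pos: "\<And>u. u \<ge> 0 \<Longrightarrow> f u > 0"
    and cont: "continuous_on {0..} f"
    and lim0: "(f \<longlongrightarrow> 0) at_top"
    and C1: "\<exists>U\<ge>0. (\<forall>u>U. f differentiable (at u)) \<and> continuous_on {U<..} (deriv f)"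
    and decr: "\<exists>U\<ge>0. \<forall>u v. U < u \<and> u \<le> v \<longrightarrow> f v \<le> f u"
    and sconv: "\<exists>U\<ge>0. strictly_convex_on {U<..} f"
  shows "(\<forall>\<alpha>. 0 < \<alpha> \<and> \<alpha> \<le> 1 \<and> regularly_varying (-\<alpha>) f \<longrightarrow>
            regularly_varying (1 / (1 + \<alpha>)) (\<lambda>y. u0 f (exp y)) \<and>
            regularly_varying (1 / (1 + \<alpha>)) (\<lambda>y. omega f (exp y)))
         \<and> (slowly_varying f \<longrightarrow> regularly_varying 1 (\<lambda>y. omega f (exp y)))"
proof -
  obtain U1 where "U1 \<ge> 0" and diff: "\<And>u. u > U1 \<Longrightarrow> f differentiable (at u)"
    using C1 by blast
  obtain U2 where sc: "strictly_convex_on {U2<..} f"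
    using sconv by blast
  interpret convex_vanishing_cost f "max U1 U2"
  proof
    show "strictly_convex_on {max U1 U2<..} f"
      by (rule strictly_convex_on_subset[OF sc]) auto
  qed (use pos cont lim0 \<open>U1 \<ge> 0\<close> diff in auto)
  show ?thesis
  proof (intro conjI allI impI)
    fix \<alpha> :: real
    assume \<alpha>: "0 < \<alpha> \<and> \<alpha> \<le> 1 \<and> regularly_varying (- \<alpha>) f"
    then show "regularly_varying (1 / (1 + \<alpha>)) (\<lambda>y. u0 f (exp y))"
      by (intro u0_exp_regularly_varying) auto
    from \<alpha> show "regularly_varying (1 / (1 + \<alpha>)) (\<lambda>y. omega f (exp y))"
      by (intro omega_exp_regularly_varying) auto
  next
    assume "slowly_varying f"
    then show "regularly_varying 1 (\<lambda>y. omega f (exp y))"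
      using omega_exp_regularly_varying[of 0] by simp
  qed
qed

end
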